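(* Let $\Psi\in\mathcal C_d$ satisfy $\lim_{t\to0^+}\Psi(\xi,t)=+\infty$ for each $\xi\in S^{n-1}$, and let $\mu$ be a nonzero finite Borel measure on $S^{n-1}$ not concentrated on any closed hemisphere. If $\{K_i\}_{i\in\mathbb N}\subseteq\mathscr K^n_{(o)}$ is uniformly bounded and $\sup_{i\in\mathbb N}\int_{S^{n-1}}\Psi(\xi,\rho_{K_i}(\xi))\,d\mu(\xi)<+\infty$, then some subsequence of $\{K_i\}$ converges in the Hausdorff metric to some $L\in\mathscr K^n_{(o)}$.
   Context: $S^{n-1}$ unit sphere of $\mathbb R^n$, $n\ge2$. $\mathscr K^n_{(o)}$: compact convex sets with the origin in their interior; $\rho_K(x)=\max\{t\ge0:tx\in K\}$. $\mathcal C_d$: functions $\Psi:S^{n-1}\times(0,\infty)\to\mathbb R$ with $\Psi$, $\Psi_t=\partial\Psi/\partial t$ continuous and $\Psi_t<0$ everywhere. $\mu$ is not concentrated on any closed hemisphere if $\int_{S^{n-1}}(u\cdot\xi)_+\,d\mu(\xi)>0$ for all $u\in S^{n-1}$. *)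

theory Defs
  imports "HOL-Analysis.Analysis"
begin

definition convex_body_o :: "'a::euclidean_space set \<Rightarrow> bool" where
  "convex_body_o K \<longleftrightarrow> compact K \<and> convex K \<and> 0 \<in> interior K"

definition radial :: "'a::euclidean_space set \<Rightarrow> 'a \<Rightarrow> real" where
  "radial K x = (GREATEST t. t \<ge> 0 \<and> t *\<^sub>R x \<in> K)"

definition class_Cd :: "('a::euclidean_space \<Rightarrow> real \<Rightarrow> real) \<Rightarrow> bool" where
  "class_Cd Psi \<longleftrightarrow>
     (\<exists>Psi_t. (\<forall>\<xi>\<in>sphere 0 1. \<forall>t>0. ((\<lambda>s. Psi \<xi> s) has_real_derivative Psi_t \<xi> t) (at t))
        \<and> continuous_on (sphere 0 1 \<times> {0<..}) (\<lambda>(\<xi>, t). Psi \<xi> t)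
        \<and> continuous_on (sphere 0 1 \<times> {0<..}) (\<lambda>(\<xi>, t). Psi_t \<xi> t)
        \<and> (\<forall>\<xi>\<in>sphere 0 1. \<forall>t>0. Psi_t \<xi> t < 0))"

text \<open>A measure on the sphere is not concentrated on any closed hemisphere.\<close>
definition not_concentrated :: "'a::euclidean_space measure \<Rightarrow> bool" where
  "not_concentrated M \<longleftrightarrow>
     (\<forall>u\<in>sphere 0 1. (\<integral>\<xi>. max 0 (u \<bullet> \<xi>) \<partial>M) > 0)"

definition hausdist :: "'a::metric_space set \<Rightarrow> 'a set \<Rightarrow> real" where
  "hausdist A B = max (SUP a\<in>A. infdist a B) (SUP b\<in>B. infdist b A)"

end

theory Submission
  imports Defs "HOL-Complex_Analysis.Great_Picard"
begin

text \<open>By Blaschke's selection theorem (proved here via Arzela-Ascoli applied to the distance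
  functions of the bodies) a subsequence converges to a compact convex set \<open>L\<close> containing the
  origin. If the origin were not interior to \<open>L\<close>, \<open>L\<close> would lie in a half-space
  \<open>u \<bullet> y \<le> 0\<close>; then the radial functions of the bodies tend to \<open>0\<close> on the open hemisphere
  \<open>u \<bullet> \<xi> > 0\<close>, so \<open>Psi(\<xi>, \<rho>(\<xi>))\<close> diverges there. That hemisphere has positive measure
  because the measure is not concentrated on a closed hemisphere, and Fatou's lemma contradicts
  the uniform bound on the integrals.\<close>

section \<open>Hausdorff distance\<close>

lemma infdist_le_hausdist:
  fixes A B :: "'a::metric_space set"
  assumes "a \<in> A" "bounded A" "B \<noteq> {}"
  shows "infdist a B \<le> hausdist A B"
proof -
  obtain b where "b \<in> B" using assms(3) by blast
  then obtain e where "\<And>x. x \<in> A \<Longrightarrow> dist x b \<le> e"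
    using assms(2) by (metis bounded_any_center dist_commute)
  then have "bdd_above ((\<lambda>x. infdist x B) ` A)"
    using infdist_le[OF \<open>b \<in> B\<close>] by (fastforce intro: bdd_aboveI2 order_trans)
  then show ?thesis
    unfolding hausdist_def by (meson assms(1) cSUP_upper max.coboundedI1)
qed

lemma hausdist_le:
  fixes A B :: "'a::metric_space set"
  assumes "A \<noteq> {}" "B \<noteq> {}"
    and "\<And>a. a \<in> A \<Longrightarrow> infdist a B \<le> c" "\<And>b. b \<in> B \<Longrightarrow> infdist b A \<le> c"
  shows "hausdist A B \<le> c"
  unfolding hausdist_def using assms by (simp add: cSUP_least)

lemma hausdist_tendsto_0I:
  fixes A :: "nat \<Rightarrow> 'a::metric_space set"
  assumes "\<And>j. A j \<noteq> {}" "\<And>j. bounded (A j)" "B \<noteq> {}"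
    and "\<And>e. e > 0 \<Longrightarrow> \<forall>\<^sub>F j in sequentially.
           (\<forall>a\<in>A j. infdist a B \<le> e) \<and> (\<forall>b\<in>B. infdist b (A j) \<le> e)"
  shows "((\<lambda>j. hausdist (A j) B) \<longlongrightarrow> 0) sequentially"
proof (rule tendstoI)
  fix e :: real
  assume "e > 0"
  show "\<forall>\<^sub>F j in sequentially. dist (hausdist (A j) B) 0 < e"
    using assms(4)[OF half_gt_zero[OF \<open>e > 0\<close>]]
  proof (elim eventually_mono)
    fix j
    assume close: "(\<forall>a\<in>A j. infdist a B \<le> e/2) \<and> (\<forall>b\<in>B. infdist b (A j) \<le> e/2)"
    obtain a where "a \<in> A j" using assms(1) by blast
    then have "0 \<le> hausdist (A j) B"
      using infdist_le_hausdist[OF _ assms(2,3)] infdist_nonneg order_trans by blast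
    moreover have "hausdist (A j) B \<le> e/2"
      using close by (intro hausdist_le assms(1,3)) auto
    ultimately show "dist (hausdist (A j) B) 0 < e" using \<open>e > 0\<close> by simp
  qed
qed

lemma infdist_tendsto_0_of_hausdist:
  fixes A :: "nat \<Rightarrow> 'a::metric_space set"
  assumes "\<And>j. a j \<in> A j" "\<And>j. bounded (A j)" "B \<noteq> {}"
    and "((\<lambda>j. hausdist (A j) B) \<longlongrightarrow> 0) sequentially"
  shows "((\<lambda>j. infdist (a j) B) \<longlongrightarrow> 0) sequentially"
  by (rule tendsto_sandwich[OF _ _ tendsto_const assms(4)])
    (use infdist_le_hausdist[OF assms(1,2,3)] in \<open>auto simp: infdist_nonneg\<close>)

lemma mem_hausdist_limit:
  fixes A :: "nat \<Rightarrow> 'a::metric_space set"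
  assumes "\<And>j. x \<in> A j" "\<And>j. bounded (A j)" "closed B" "B \<noteq> {}"
    and "((\<lambda>j. hausdist (A j) B) \<longlongrightarrow> 0) sequentially"
  shows "x \<in> B"
  using infdist_tendsto_0_of_hausdist[of "\<lambda>_. x", OF assms(1,2,4,5)]
  by (simp add: LIMSEQ_const_iff in_closed_iff_infdist_zero[OF assms(3,4)])

section \<open>Blaschke selection theorem\<close>

lemma convex_on_infdist:
  fixes K :: "'a::{real_normed_vector, heine_borel} set"
  assumes "convex K" "closed K"
  shows "convex_on UNIV (\<lambda>x. infdist x K)"
proof (cases "K = {}")
  case False
  show ?thesis
  proof (rule convex_onI)
    fix t :: real and x y :: 'a
    assume t: "0 < t" "t < 1"
    obtain p where p: "p \<in> K" "infdist x K = dist x p"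
      using infdist_attains_inf[OF assms(2) False] by blast
    obtain q where q: "q \<in> K" "infdist y K = dist y q"
      using infdist_attains_inf[OF assms(2) False] by blast
    have "(1 - t) *\<^sub>R p + t *\<^sub>R q \<in> K"
      using convexD[OF assms(1) p(1) q(1)] t by simp
    then have "infdist ((1 - t) *\<^sub>R x + t *\<^sub>R y) K
               \<le> dist ((1 - t) *\<^sub>R x + t *\<^sub>R y) ((1 - t) *\<^sub>R p + t *\<^sub>R q)"
      by (rule infdist_le)
    also have "\<dots> = norm ((1 - t) *\<^sub>R (x - p) + t *\<^sub>R (y - q))"
      by (simp add: dist_norm algebra_simps)
    also have "\<dots> \<le> (1 - t) * dist x p + t * dist y q"
      using norm_triangle_ineq[of "(1 - t) *\<^sub>R (x - p)" "t *\<^sub>R (y - q)"] t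
      by (simp add: dist_norm)
    finally show "infdist ((1 - t) *\<^sub>R x + t *\<^sub>R y) K \<le> (1 - t) * infdist x K + t * infdist y K"
      using p q by simp
  qed simp
qed (simp add: infdist_def convex_on_const)

lemma infdist_uniformly_convergent_subseq:
  fixes K :: "nat \<Rightarrow> 'a::euclidean_space set"
  assumes "\<And>n. K n \<noteq> {}" "\<And>n. K n \<subseteq> cball 0 R"
  obtains g k where "continuous_on (cball 0 R) g" "strict_mono k"
    "uniform_limit (cball 0 R) (\<lambda>n x. infdist x (K (k n))) g sequentially"
proof -
  have infdist_bound: "norm (infdist x (K n)) \<le> 2 * R" if "x \<in> cball 0 R" for n x
  proof -
    obtain a where a: "a \<in> K n" using assms(1) by blast
    then have "infdist x (K n) \<le> norm x + norm a"
      using infdist_le[OF a, of x] norm_triangle_ineq4[of x a] by (simp add: dist_norm)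
    also have "\<dots> \<le> 2 * R" using that a assms(2)[of n] by auto
    finally show ?thesis by (simp add: infdist_nonneg)
  qed
  have equicont: "\<exists>d>0. \<forall>n y. y \<in> cball 0 R \<and> norm (x - y) < d
                    \<longrightarrow> norm (infdist x (K n) - infdist y (K n)) < e"
    if "e > 0" for x and e :: real
    using that infdist_triangle_abs by (metis dist_norm le_less_trans real_norm_def)
  show ?thesis
  proof (rule Arzela_Ascoli[OF compact_cball infdist_bound equicont])
    fix g and k :: "nat \<Rightarrow> nat"
    assume "continuous_on (cball 0 R) g" "strict_mono k"
      "\<And>e. 0 < e \<Longrightarrow> \<exists>N. \<forall>n x. n \<ge> N \<and> x \<in> cball 0 R
         \<longrightarrow> norm (infdist x (K (k n)) - g x) < e"
    then show thesis
      by (intro that) (force simp: uniform_limit_sequentially_iff dist_norm)+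
  qed
qed

lemma infdist_limit_eq_infdist_zero_set:
  fixes K :: "nat \<Rightarrow> 'a::heine_borel set"
  assumes C: "compact C" and K: "\<And>n. compact (K n)" "\<And>n. K n \<noteq> {}" "\<And>n. K n \<subseteq> C"
    and lim: "\<And>x. x \<in> C \<Longrightarrow> (\<lambda>n. infdist x (K n)) \<longlonglongrightarrow> g x"
  shows "{y \<in> C. g y = 0} \<noteq> {}" "\<And>x. x \<in> C \<Longrightarrow> g x = infdist x {y \<in> C. g y = 0}"
proof -
  define L where "L = {y \<in> C. g y = 0}"
  have g_nonneg: "0 \<le> g x" if "x \<in> C" for x
    using LIMSEQ_le_const[OF lim[OF that]] infdist_nonneg by blast
  have g_le_dist: "g x \<le> dist x y" if "x \<in> C" "y \<in> L" for x y
  proof -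
    have "(\<lambda>n. infdist y (K n) + dist x y) \<longlonglongrightarrow> dist x y"
      using tendsto_add[OF lim, of y] that by (auto simp: L_def)
    then show ?thesis
      using LIMSEQ_le[OF lim[OF \<open>x \<in> C\<close>]] infdist_triangle by blast
  qed
  have nearest: "\<exists>y\<in>L. dist x y \<le> g x" if x: "x \<in> C" for x
  proof -
    have "\<exists>p. p \<in> K n \<and> infdist x (K n) = dist x p" for n
      using infdist_attains_inf[OF compact_imp_closed[OF K(1)] K(2)] by metis
    then obtain p where p: "\<And>n. p n \<in> K n" "\<And>n. infdist x (K n) = dist x (p n)"
      by metis
    then obtain y s where y: "y \<in> C" "strict_mono s" "(p \<circ> s) \<longlonglongrightarrow> y"
      using compact_imp_seq_compact[OF C] K(3) unfolding seq_compact_def by (metis subsetD)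
    have "(\<lambda>n. infdist x (K (s n))) \<longlonglongrightarrow> dist x y"
      using tendsto_dist[OF tendsto_const y(3)] p(2) by (simp add: o_def)
    then have gx: "g x = dist x y"
      using LIMSEQ_unique LIMSEQ_subseq_LIMSEQ[OF lim[OF x] y(2)] by (simp add: o_def)
    have "(\<lambda>n. dist y (p (s n))) \<longlonglongrightarrow> 0"
      using tendsto_dist[OF tendsto_const y(3), of y] by (simp add: o_def)
    moreover have "(\<lambda>n. infdist y (K (s n))) \<longlonglongrightarrow> g y"
      using LIMSEQ_subseq_LIMSEQ[OF lim[OF y(1)] y(2)] by (simp add: o_def)
    ultimately have "g y \<le> 0"
      using p(1) by (auto intro: LIMSEQ_le infdist_le)
    then have "y \<in> L" using g_nonneg[OF y(1)] y(1) by (simp add: L_def)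
    then show ?thesis using gx by auto
  qed
  have "C \<noteq> {}" using K(2,3) by blast
  then show L_ne: "L \<noteq> {}" using nearest by blast
  fix x assume "x \<in> C"
  then obtain y where "y \<in> L" "dist x y \<le> g x" using nearest by blast
  then have "infdist x L \<le> g x" by (meson infdist_le order_trans)
  moreover have "g x \<le> infdist x L"
    unfolding infdist_notempty[OF L_ne] by (rule cINF_greatest[OF L_ne g_le_dist[OF \<open>x \<in> C\<close>]])
  ultimately show "g x = infdist x L" by simp
qed

lemma convex_zero_set_of_infdist_limit:
  fixes K :: "nat \<Rightarrow> 'a::{real_normed_vector, heine_borel} set"
  assumes K: "\<And>n. convex (K n)" "\<And>n. closed (K n)" and "convex C"
    and lim: "\<And>x. x \<in> C \<Longrightarrow> (\<lambda>n. infdist x (K n)) \<longlonglongrightarrow> g x"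
  shows "convex {x \<in> C. g x = 0}"
  unfolding convex_alt
proof (intro ballI allI impI)
  fix x y and t :: real
  assume xy: "x \<in> {x \<in> C. g x = 0}" "y \<in> {x \<in> C. g x = 0}" and t: "0 \<le> t \<and> t \<le> 1"
  define z where "z = (1 - t) *\<^sub>R x + t *\<^sub>R y"
  have "x \<in> C" "y \<in> C" "g x = 0" "g y = 0" using xy by auto
  then have "z \<in> C" using t \<open>convex C\<close> unfolding convex_alt z_def by blast
  have "infdist z (K n) \<le> (1 - t) * infdist x (K n) + t * infdist y (K n)" for n
    using convex_onD[OF convex_on_infdist[OF K]] t by (simp add: z_def)
  moreover have "(\<lambda>n. (1 - t) * infdist x (K n) + t * infdist y (K n))
      \<longlonglongrightarrow> (1 - t) * g x + t * g y"
    by (intro tendsto_add tendsto_mult_left lim \<open>x \<in> C\<close> \<open>y \<in> C\<close>)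
  ultimately have "g z \<le> 0"
    using LIMSEQ_le[OF lim[OF \<open>z \<in> C\<close>]] \<open>g x = 0\<close> \<open>g y = 0\<close> by fastforce
  moreover have "0 \<le> g z"
    using LIMSEQ_le_const[OF lim[OF \<open>z \<in> C\<close>]] infdist_nonneg by blast
  ultimately show "(1 - t) *\<^sub>R x + t *\<^sub>R y \<in> {x \<in> C. g x = 0}"
    using \<open>z \<in> C\<close> by (simp add: z_def)
qed

lemma hausdist_tendsto_0_if_uniform_limit_infdist:
  fixes K :: "nat \<Rightarrow> 'a::metric_space set"
  assumes K: "\<And>n. K n \<noteq> {}" "\<And>n. K n \<subseteq> C" and "bounded C" "L \<noteq> {}"
    and unif: "uniform_limit C (\<lambda>n x. infdist x (K n)) (\<lambda>x. infdist x L) sequentially"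
    and "L \<subseteq> C"
  shows "((\<lambda>n. hausdist (K n) L) \<longlongrightarrow> 0) sequentially"
proof (rule hausdist_tendsto_0I[OF K(1) _ \<open>L \<noteq> {}\<close>])
  show "bounded (K n)" for n using bounded_subset[OF \<open>bounded C\<close> K(2)] .
  fix e :: real
  assume "e > 0"
  with unif have "\<forall>\<^sub>F n in sequentially. \<forall>x\<in>C. dist (infdist x (K n)) (infdist x L) < e"
    by (simp add: uniform_limit_iff)
  then show "\<forall>\<^sub>F n in sequentially.
      (\<forall>a\<in>K n. infdist a L \<le> e) \<and> (\<forall>b\<in>L. infdist b (K n) \<le> e)"
  proof (elim eventually_mono, intro conjI ballI)
    fix n a b
    assume close: "\<forall>x\<in>C. dist (infdist x (K n)) (infdist x L) < e"
    show "infdist a L \<le> e" if "a \<in> K n"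
      using close K(2) that by (fastforce simp: dist_real_def)
    show "infdist b (K n) \<le> e" if "b \<in> L"
      using close \<open>L \<subseteq> C\<close> that by (fastforce simp: dist_real_def)
  qed
qed

theorem blaschke_selection:
  fixes K :: "nat \<Rightarrow> 'a::euclidean_space set"
  assumes K: "\<And>i. compact (K i)" "\<And>i. convex (K i)" "\<And>i. K i \<noteq> {}"
    and K_bdd: "\<And>i. K i \<subseteq> cball 0 R"
  obtains r L where "strict_mono r" "compact L" "convex L" "L \<noteq> {}"
    "((\<lambda>j. hausdist (K (r j)) L) \<longlongrightarrow> 0) sequentially"
proof -
  define C where "C = cball (0::'a) R"
  have "compact C" and K_C: "K i \<subseteq> C" for i using K_bdd by (simp_all add: C_def)
  obtain g k where g_cont: "continuous_on C g" and k: "strict_mono k"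
    and unif: "uniform_limit C (\<lambda>n x. infdist x (K (k n))) g sequentially"
    using infdist_uniformly_convergent_subseq[OF K(3) K_bdd, folded C_def] .
  have lim: "(\<lambda>n. infdist x (K (k n))) \<longlonglongrightarrow> g x" if "x \<in> C" for x
    using tendsto_uniform_limitI[OF unif that] .
  define L where "L = {x \<in> C. g x = 0}"
  have L_ne: "L \<noteq> {}" and g_eq: "\<And>x. x \<in> C \<Longrightarrow> g x = infdist x L"
    using infdist_limit_eq_infdist_zero_set[OF \<open>compact C\<close> K(1) K(3) K_C lim, folded L_def]
    by auto
  have "closed L"
    unfolding L_def by (rule continuous_closed_preimage_constant[OF g_cont]) (simp add: C_def)
  then have "compact (C \<inter> L)" using \<open>compact C\<close> by (rule compact_Int_closed[rotated])
  then have "compact L" by (simp add: L_def Int_absorb1)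
  have "convex L"
    unfolding L_def
    by (rule convex_zero_set_of_infdist_limit[OF K(2) compact_imp_closed[OF K(1)] _ lim])
      (simp add: C_def)
  have unif_L: "uniform_limit C (\<lambda>n x. infdist x (K (k n))) (\<lambda>x. infdist x L) sequentially"
    by (rule iffD1[OF uniform_limit_cong'[OF refl g_eq] unif])
  have "((\<lambda>j. hausdist (K (k j)) L) \<longlongrightarrow> 0) sequentially"
    by (rule hausdist_tendsto_0_if_uniform_limit_infdist[OF K(3) K_C _ L_ne unif_L])
      (auto simp: C_def L_def)
  then show ?thesis by (rule that[OF k \<open>compact L\<close> \<open>convex L\<close> L_ne])
qed

section \<open>Radial functions and the class C_d\<close>

lemma radial_greatest:
  fixes K :: "'a::euclidean_space set"
  assumes K: "compact K" "0 \<in> K" and "\<xi> \<noteq> 0"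
  shows "0 \<le> radial K \<xi>" "radial K \<xi> *\<^sub>R \<xi> \<in> K"
    "\<And>t. 0 \<le> t \<Longrightarrow> t *\<^sub>R \<xi> \<in> K \<Longrightarrow> t \<le> radial K \<xi>"
proof -
  define S where "S = {t. 0 \<le> t \<and> t *\<^sub>R \<xi> \<in> K}"
  obtain B where B: "\<And>x. x \<in> K \<Longrightarrow> norm x \<le> B"
    using compact_imp_bounded[OF K(1)] unfolding bounded_iff by auto
  have "bounded S"
    unfolding bounded_iff
  proof (intro exI ballI)
    fix t assume "t \<in> S"
    then have "0 \<le> t" "t *\<^sub>R \<xi> \<in> K" by (auto simp: S_def)
    then have "t * norm \<xi> \<le> B" using B[of "t *\<^sub>R \<xi>"] by simp
    then show "norm t \<le> B / norm \<xi>"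
      using \<open>0 \<le> t\<close> \<open>\<xi> \<noteq> 0\<close> by (simp add: pos_le_divide_eq)
  qed
  moreover have "closed S"
  proof -
    have "closed ((\<lambda>t. t *\<^sub>R \<xi>) -` K)"
      by (rule closed_vimage[OF compact_imp_closed[OF K(1)]]) (intro continuous_intros)
    moreover have "S = {0..} \<inter> (\<lambda>t. t *\<^sub>R \<xi>) -` K" by (auto simp: S_def)
    ultimately show ?thesis by (simp add: closed_Int)
  qed
  ultimately have "compact S" by (simp add: compact_eq_bounded_closed)
  moreover have "0 \<in> S" using K(2) by (simp add: S_def)
  ultimately obtain s where s: "s \<in> S" "\<And>t. t \<in> S \<Longrightarrow> t \<le> s"
    using compact_attains_sup by (metis empty_iff)
  have "radial K \<xi> = s"
    unfolding radial_def by (rule Greatest_equality) (use s in \<open>auto simp: S_def\<close>)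
  then show "0 \<le> radial K \<xi>" "radial K \<xi> *\<^sub>R \<xi> \<in> K"
    "\<And>t. 0 \<le> t \<Longrightarrow> t *\<^sub>R \<xi> \<in> K \<Longrightarrow> t \<le> radial K \<xi>"
    using s by (auto simp: S_def)
qed

lemma radial_pos:
  fixes K :: "'a::euclidean_space set"
  assumes "compact K" "0 \<in> interior K" "\<xi> \<noteq> 0"
  shows "0 < radial K \<xi>"
proof -
  obtain e where "e > 0" "ball 0 e \<subseteq> K"
    using assms(2) mem_interior by blast
  moreover have "norm ((e / (2 * norm \<xi>)) *\<^sub>R \<xi>) < e"
    using \<open>e > 0\<close> \<open>\<xi> \<noteq> 0\<close> by simp
  ultimately have "(e / (2 * norm \<xi>)) *\<^sub>R \<xi> \<in> K" by auto
  moreover have pos: "0 < e / (2 * norm \<xi>)" using \<open>e > 0\<close> \<open>\<xi> \<noteq> 0\<close> by simp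
  ultimately have "e / (2 * norm \<xi>) \<le> radial K \<xi>"
    using radial_greatest(3)[OF assms(1) subsetD[OF interior_subset assms(2)] assms(3)]
    by (simp add: less_imp_le)
  with pos show ?thesis by linarith
qed

lemma radial_le_radius:
  fixes K :: "'a::euclidean_space set"
  assumes "compact K" "0 \<in> K" "K \<subseteq> cball 0 R" "\<xi> \<noteq> 0"
  shows "radial K \<xi> * norm \<xi> \<le> R"
  using radial_greatest(1,2)[OF assms(1,2,4)] assms(3) by auto

lemma class_Cd_antimono:
  assumes "class_Cd Psi" "\<xi> \<in> sphere 0 1" "0 < s" "s \<le> t"
  shows "Psi \<xi> t \<le> Psi \<xi> s"
proof (cases "s = t")
  case False
  obtain Psi_t where
    deriv: "\<forall>\<xi>\<in>sphere 0 1. \<forall>t>0. ((\<lambda>s. Psi \<xi> s) has_real_derivative Psi_t \<xi> t) (at t)" and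
    neg: "\<forall>\<xi>\<in>sphere 0 1. \<forall>t>0. Psi_t \<xi> t < 0"
    using assms(1) unfolding class_Cd_def by blast
  have "Psi \<xi> t < Psi \<xi> s"
  proof (rule DERIV_neg_imp_decreasing[of s t "Psi \<xi>"])
    show "s < t" using False assms(4) by simp
    fix x assume "s \<le> x"
    then have "0 < x" using assms(3) by simp
    then show "\<exists>y. (Psi \<xi> has_real_derivative y) (at x) \<and> y < 0"
      using deriv neg assms(2) by blast
  qed
  then show ?thesis by simp
qed simp

lemma class_Cd_bounded_below:
  assumes "class_Cd (Psi :: 'a::euclidean_space \<Rightarrow> real \<Rightarrow> real)"
  obtains m where "\<And>\<xi> t. \<xi> \<in> sphere 0 1 \<Longrightarrow> 0 < t \<Longrightarrow> t \<le> R \<Longrightarrow> m \<le> Psi \<xi> t"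
proof (cases "R > 0")
  case True
  have "continuous_on (sphere 0 1 \<times> {0<..}) (\<lambda>(\<xi>::'a, t). Psi \<xi> t)"
    using assms unfolding class_Cd_def by auto
  then have "continuous_on (sphere (0::'a) 1) (\<lambda>\<xi>. (\<lambda>(\<xi>, t). Psi \<xi> t) (\<xi>, R))"
    by (rule continuous_on_compose2) (use True in \<open>auto intro!: continuous_intros\<close>)
  then have "compact ((\<lambda>\<xi>. Psi \<xi> R) ` sphere (0::'a) 1)"
    by (intro compact_continuous_image) auto
  then have "bounded ((\<lambda>\<xi>. Psi \<xi> R) ` sphere (0::'a) 1)"
    by (rule compact_imp_bounded)
  then obtain B where B: "\<forall>y\<in>(\<lambda>\<xi>. Psi \<xi> R) ` sphere (0::'a) 1. norm y \<le> B"
    unfolding bounded_iff ..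
  show ?thesis
  proof (rule that)
    fix \<xi> :: 'a and t
    assume \<xi>: "\<xi> \<in> sphere 0 1" and t: "0 < t" "t \<le> R"
    have "\<bar>Psi \<xi> R\<bar> \<le> B" using B \<xi> by simp
    then have "- B \<le> Psi \<xi> R" by linarith
    also have "\<dots> \<le> Psi \<xi> t" by (rule class_Cd_antimono[OF assms \<xi> t])
    finally show "- B \<le> Psi \<xi> t" .
  qed
next
  case False
  show ?thesis
  proof (rule that)
    fix t :: real assume "0 < t" "t \<le> R"
    with False show "0 \<le> Psi \<xi> t" for \<xi> by linarith
  qed
qed

section \<open>Bodies with bounded Psi-integrals do not flatten at the origin\<close>

lemma supporting_halfspace_0:
  fixes L :: "'a::euclidean_space set"
  assumes "convex L" "0 \<in> L" "0 \<notin> interior L"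
  obtains u where "norm u = 1" "\<And>y. y \<in> L \<Longrightarrow> u \<bullet> y \<le> 0"
proof -
  obtain a where a: "a \<noteq> 0" "\<And>y. y \<in> L \<Longrightarrow> a \<bullet> y \<le> 0"
  proof (cases "interior L = {}")
    case True
    then obtain a b where "a \<noteq> 0" "L \<subseteq> {x. a \<bullet> x = b}"
      using empty_interior_subset_hyperplane[OF assms(1)] by metis
    moreover have "b = 0" using assms(2) \<open>L \<subseteq> _\<close> by auto
    ultimately show ?thesis by (intro that[of a]) auto
  next
    case False
    then have "0 \<notin> rel_interior L"
      using assms(3) rel_interior_nonempty_interior by metis
    then obtain a where "a \<noteq> 0" "\<And>y. y \<in> closure L \<Longrightarrow> a \<bullet> 0 \<le> a \<bullet> y"
      using supporting_hyperplane_relative_frontier[OF assms(1) closure_subset[THEN subsetD, OF assms(2)]]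
      by metis
    then show ?thesis
      using that[of "- a"] closure_subset by (auto simp: inner_minus_left)
  qed
  show ?thesis
  proof (rule that)
    show "norm (a /\<^sub>R norm a) = 1" using a(1) by simp
    show "(a /\<^sub>R norm a) \<bullet> y \<le> 0" if "y \<in> L" for y
      using a(2)[OF that] by (simp add: mult_nonneg_nonpos)
  qed
qed

lemma inner_le_infdist:
  fixes u :: "'a::real_inner"
  assumes "norm u \<le> 1" "\<And>y. y \<in> L \<Longrightarrow> u \<bullet> y \<le> 0" "L \<noteq> {}"
  shows "u \<bullet> x \<le> infdist x L"
  unfolding infdist_notempty[OF assms(3)]
proof (rule cINF_greatest[OF assms(3)])
  fix y assume "y \<in> L"
  have "u \<bullet> x \<le> u \<bullet> (x - y)"
    using assms(2)[OF \<open>y \<in> L\<close>] by (simp add: inner_diff_right)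
  also have "\<dots> \<le> norm u * norm (x - y)" by (rule norm_cauchy_schwarz)
  also have "\<dots> \<le> dist x y"
    using assms(1) by (simp add: dist_norm mult_left_le_one_le)
  finally show "u \<bullet> x \<le> dist x y" .
qed

lemma tendsto_0_if_hausdist_limit_in_halfspace:
  fixes K :: "nat \<Rightarrow> 'a::euclidean_space set"
  assumes t: "\<And>j. 0 \<le> t j" "\<And>j. t j *\<^sub>R \<xi> \<in> K j"
    and K: "\<And>j. bounded (K j)" "L \<noteq> {}" "((\<lambda>j. hausdist (K j) L) \<longlongrightarrow> 0) sequentially"
    and u: "norm u \<le> 1" "\<And>y. y \<in> L \<Longrightarrow> u \<bullet> y \<le> 0" "0 < u \<bullet> \<xi>"
  shows "t \<longlonglongrightarrow> 0"
proof (rule tendsto_sandwich[OF _ _ tendsto_const])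
  show "(\<lambda>j. infdist (t j *\<^sub>R \<xi>) L / (u \<bullet> \<xi>)) \<longlonglongrightarrow> 0"
    by (rule tendsto_divide_zero[OF infdist_tendsto_0_of_hausdist[OF t(2) K]])
  have "t j * (u \<bullet> \<xi>) \<le> infdist (t j *\<^sub>R \<xi>) L" for j
    using inner_le_infdist[OF u(1,2) K(2), of "t j *\<^sub>R \<xi>"] by simp
  then show "\<forall>\<^sub>F j in sequentially. t j \<le> infdist (t j *\<^sub>R \<xi>) L / (u \<bullet> \<xi>)"
    using u(3) by (simp add: pos_le_divide_eq)
qed (use t in simp)

lemma emeasure_pos_part_neq_0:
  fixes f :: "'a \<Rightarrow> real"
  assumes "f \<in> borel_measurable M" "(\<integral>x. max 0 (f x) \<partial>M) > 0"
  shows "emeasure M {x \<in> space M. 0 < f x} \<noteq> 0"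
proof
  assume "emeasure M {x \<in> space M. 0 < f x} = 0"
  then have "AE x in M. \<not> 0 < f x"
    using assms(1) by (intro AE_I[of _ _ "{x \<in> space M. 0 < f x}"]) auto
  then have "AE x in M. max 0 (f x) = 0" by (rule AE_mp) auto
  then have "(\<integral>x. max 0 (f x) \<partial>M) = 0" by (rule integral_eq_zero_AE)
  with assms(2) show False by simp
qed

lemma emeasure_divergence_set_eq_0:
  fixes f :: "nat \<Rightarrow> 'a \<Rightarrow> real"
  assumes M: "finite_measure M"
    and f: "\<And>j. integrable M (f j)" "\<And>j x. x \<in> space M \<Longrightarrow> m \<le> f j x"
      "\<And>j. (\<integral>x. f j x \<partial>M) \<le> C"
    and A: "A \<in> sets M" "\<And>x. x \<in> A \<Longrightarrow> filterlim (\<lambda>j. f j x) at_top sequentially"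
  shows "emeasure M A = 0"
proof -
  define h where "h j x = ennreal (f j x - m)" for j x
  have h_int: "(\<integral>\<^sup>+x. h j x \<partial>M) \<le> ennreal (C - m * measure M (space M))" for j
  proof -
    have int: "integrable M (\<lambda>x. f j x - m)"
      using f(1) finite_measure.integrable_const[OF M] by (rule Bochner_Integration.integrable_diff)
    have "(\<integral>\<^sup>+x. h j x \<partial>M) = ennreal (\<integral>x. f j x - m \<partial>M)"
      unfolding h_def using f(2) by (intro nn_integral_eq_integral int AE_I2) auto
    also have "(\<integral>x. f j x - m \<partial>M) = (\<integral>x. f j x \<partial>M) - (\<integral>x. m \<partial>M)"
      by (rule Bochner_Integration.integral_diff[OF f(1) finite_measure.integrable_const[OF M]])
    finally show ?thesis using f(3)[of j] by (simp add: ennreal_leI mult.commute)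
  qed
  have liminf_top: "liminf (\<lambda>j. h j x) = top" if "x \<in> A" for x
  proof -
    have "filterlim (\<lambda>j. f j x - m) at_top sequentially"
      using filterlim_tendsto_add_at_top[OF tendsto_const A(2)[OF that], of "- m"] by simp
    then have "((\<lambda>j. h j x) \<longlongrightarrow> top) sequentially"
      by (simp add: h_def ennreal_tendsto_top_eq_at_top)
    then show ?thesis by (simp add: lim_imp_Liminf)
  qed
  have "top * emeasure M A = (\<integral>\<^sup>+x. top * indicator A x \<partial>M)"
    using A(1) by (simp add: nn_integral_cmult_indicator)
  also have "\<dots> \<le> (\<integral>\<^sup>+x. liminf (\<lambda>j. h j x) \<partial>M)"
    by (intro nn_integral_mono) (simp add: liminf_top split: split_indicator)
  also have "\<dots> \<le> liminf (\<lambda>j. \<integral>\<^sup>+x. h j x \<partial>M)"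
    using f(1) by (intro nn_integral_liminf) (simp add: h_def borel_measurable_integrable)
  also have "\<dots> \<le> ennreal (C - m * measure M (space M))"
    using h_int by (intro Liminf_le) auto
  finally show ?thesis by (auto simp: ennreal_top_mult top_unique split: if_splits)
qed

lemma hausdist_limit_has_0_in_interior:
  fixes Psi :: "'a::euclidean_space \<Rightarrow> real \<Rightarrow> real"
    and M :: "'a measure" and K :: "nat \<Rightarrow> 'a set"
  assumes Psi_Cd: "class_Cd Psi"
    and Psi_lim: "\<And>\<xi>. \<xi> \<in> sphere 0 1 \<Longrightarrow> filterlim (\<lambda>t. Psi \<xi> t) at_top (at_right 0)"
    and M_space: "space M = sphere 0 1"
    and M_sets: "sets M = sets (restrict_space borel (sphere (0::'a) 1))"
    and M_finite: "finite_measure M"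
    and M_nc: "not_concentrated M"
    and K_body: "\<And>j. convex_body_o (K j)"
    and K_bdd: "\<And>j. K j \<subseteq> cball 0 R"
    and K_int: "\<And>j. integrable M (\<lambda>\<xi>. Psi \<xi> (radial (K j) \<xi>))"
      "\<And>j. (\<integral>\<xi>. Psi \<xi> (radial (K j) \<xi>) \<partial>M) \<le> C"
    and L: "convex L" "0 \<in> L" "((\<lambda>j. hausdist (K j) L) \<longlongrightarrow> 0) sequentially"
  shows "0 \<in> interior L"
proof (rule ccontr)
  assume "0 \<notin> interior L"
  then obtain u where u: "norm u = 1" "\<And>y. y \<in> L \<Longrightarrow> u \<bullet> y \<le> 0"
    using supporting_halfspace_0[OF L(1,2)] by blast
  define U where "U = {\<xi> \<in> space M. 0 < u \<bullet> \<xi>}"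
  have K: "compact (K j)" "0 \<in> interior (K j)" for j
    using K_body unfolding convex_body_o_def by auto
  have K0: "0 \<in> K j" for j using K(2) interior_subset by blast
  have inner_meas: "(\<lambda>\<xi>. u \<bullet> \<xi>) \<in> borel_measurable M"
    unfolding measurable_cong_sets[OF M_sets refl] by (intro measurable_restrict_space1) simp
  have "emeasure M U \<noteq> 0"
    using emeasure_pos_part_neq_0[OF inner_meas] M_nc u(1)
    unfolding not_concentrated_def U_def by simp
  moreover obtain m where m: "\<And>\<xi> t. \<xi> \<in> sphere 0 1 \<Longrightarrow> 0 < t \<Longrightarrow> t \<le> R \<Longrightarrow> m \<le> Psi \<xi> t"
    using class_Cd_bounded_below[OF Psi_Cd] by metis
  have "emeasure M U = 0"
  proof (rule emeasure_divergence_set_eq_0[OF M_finite K_int(1) _ K_int(2)])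
    fix j and \<xi> :: 'a
    assume "\<xi> \<in> space M"
    then have "\<xi> \<in> sphere 0 1" "\<xi> \<noteq> 0" using M_space by auto
    then show "m \<le> Psi \<xi> (radial (K j) \<xi>)"
      using m radial_pos[OF K \<open>\<xi> \<noteq> 0\<close>] radial_le_radius[OF K(1) K0 K_bdd \<open>\<xi> \<noteq> 0\<close>]
      by simp
  next
    show "U \<in> sets M" using inner_meas unfolding U_def by measurable
  next
    fix \<xi> assume "\<xi> \<in> U"
    then have \<xi>: "\<xi> \<in> sphere 0 1" "\<xi> \<noteq> 0" "0 < u \<bullet> \<xi>" using M_space by (auto simp: U_def)
    have "(\<lambda>j. radial (K j) \<xi>) \<longlonglongrightarrow> 0"
      using tendsto_0_if_hausdist_limit_in_halfspace[of "\<lambda>j. radial (K j) \<xi>" \<xi> K L u]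
        radial_greatest(1,2)[OF K(1) K0 \<xi>(2)] bounded_subset[OF bounded_cball K_bdd]
        L(2,3) u \<xi>(3)
      by auto
    then have "filterlim (\<lambda>j. radial (K j) \<xi>) (at_right 0) sequentially"
      using radial_pos[OF K \<xi>(2)] by (auto intro: tendsto_imp_filterlim_at_right)
    then show "filterlim (\<lambda>j. Psi \<xi> (radial (K j) \<xi>)) at_top sequentially"
      by (rule filterlim_compose[OF Psi_lim[OF \<xi>(1)]])
  qed
  ultimately show False by contradiction
qed

theorem lemma5p3:
  fixes Psi :: "'a::euclidean_space \<Rightarrow> real \<Rightarrow> real"
    and M :: "'a measure"
    and K :: "nat \<Rightarrow> 'a set"
  assumes dim: "DIM('a) \<ge> 2"
    and Psi_Cd: "class_Cd Psi"
    and Psi_lim: "\<And>\<xi>. \<xi> \<in> sphere 0 1 \<Longrightarrow> filterlim (\<lambda>t. Psi \<xi> t) at_top (at_right 0)"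
    and M_space: "space M = sphere 0 1"
    and M_sets: "sets M = sets (restrict_space borel (sphere (0::'a) 1))"
    and M_finite: "finite_measure M"
    and M_nonzero: "emeasure M (space M) \<noteq> 0"
    and M_nc: "not_concentrated M"
    and K_body: "\<And>i. convex_body_o (K i)"
    and K_bdd: "\<exists>R. \<forall>i. K i \<subseteq> cball 0 R"
    and K_int: "\<exists>C. \<forall>i. integrable M (\<lambda>\<xi>. Psi \<xi> (radial (K i) \<xi>))
                        \<and> (\<integral>\<xi>. Psi \<xi> (radial (K i) \<xi>) \<partial>M) \<le> C"
  shows "\<exists>r L. strict_mono r \<and> convex_body_o L \<and>
           ((\<lambda>j. hausdist (K (r j)) L) \<longlongrightarrow> 0) sequentially"
proof -
  obtain R where K_in_ball: "\<And>i. K i \<subseteq> cball 0 R" using K_bdd by auto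
  obtain C where K_int_bdd: "\<And>i. integrable M (\<lambda>\<xi>. Psi \<xi> (radial (K i) \<xi>))"
    "\<And>i. (\<integral>\<xi>. Psi \<xi> (radial (K i) \<xi>) \<partial>M) \<le> C"
    using K_int by auto
  have K: "compact (K i)" "convex (K i)" "0 \<in> interior (K i)" for i
    using K_body unfolding convex_body_o_def by auto
  have K0: "0 \<in> K i" for i using K(3) interior_subset by blast
  then have K_ne: "K i \<noteq> {}" for i by blast
  obtain r L where r: "strict_mono r" and L: "compact L" "convex L" "L \<noteq> {}"
    and lim: "((\<lambda>j. hausdist (K (r j)) L) \<longlongrightarrow> 0) sequentially"
    by (rule blaschke_selection[OF K(1,2) K_ne K_in_ball])
  have "0 \<in> L"
    using mem_hausdist_limit[OF K0 bounded_subset[OF bounded_cball K_in_ball]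
        compact_imp_closed[OF L(1)] L(3) lim] .
  have "0 \<in> interior L"
    by (rule hausdist_limit_has_0_in_interior[OF Psi_Cd Psi_lim M_space M_sets M_finite M_nc
          K_body K_in_ball K_int_bdd L(2) \<open>0 \<in> L\<close> lim])
  with L(1,2) have "convex_body_o L" unfolding convex_body_o_def by blast
  with r lim show ?thesis by blast
qed

end
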